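(* Let $n\ge 1$ and $\mathbf{x}\in\{0,1\}^n$. Let $\omega=\omega(\mathbf{x}')$ be the Hamming weight of the derivative sequence $\mathbf{x}'$, let $m$ be the number of 1-runs in $\mathbf{x}'$, and let $m_1$ be the number of 1-runs of length $1$ in $\mathbf{x}'$. Then (a) $|\Phi_1(\mathbf{x})| = 1+\omega = r(\mathbf{x})$; (b) $|\Phi_2(\mathbf{x})| = 1+m+\binom{\omega}{2}$; (c) $|\Phi_3(\mathbf{x})| = 1+m_1+m(\omega-3)+\binom{\omega}{3}-\binom{\omega}{2}+2\omega$.
   Context: A grain pattern of length $n$ is a subset $E\subseteq\{2,\dots,n\}$ containing no two consecutive integers. For such $E$, the map $\phi_E:\{0,1\}^n\to\{0,1\}^n$ sends $\mathbf{x}=(x_1,\dots,x_n)$ to $\mathbf{y}=(y_1,\dots,y_n)$ with $y_j=x_{j-1}$ if $j\in E$ and $y_j=x_j$ otherwise. For $t\ge0$, $\mathcal{E}_{n,t}$ is the set of grain patterns $E$ of length $n$ with $|E|\le t$, and $\Phi_t(\mathbf{x})=\{\phi_E(\mathbf{x}):E\in\mathcal{E}_{n,t}\}$ (a set, so distinct patterns giving the same sequence are counted once). A run of $\mathbf{x}$ is a maximal block of consecutive identical symbols; $r(\mathbf{x})$ is the number of runs of $\mathbf{x}$. The derivative sequence of $\mathbf{x}$ is $\mathbf{x}'=(x'_2,\dots,x'_n)$ with $x'_j=x_{j-1}\oplus x_j$ (addition mod 2); a 1-run of $\mathbf{x}'$ is a maximal block of consecutive 1s in $\mathbf{x}'$.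 Binomial coefficients $\binom{a}{b}$ are $0$ when $b>a\ge 0$. *)

theory Defs
  imports Main
begin

text \<open>Binary sequences of length n are lists of booleans of length n (True = 1).
  The paper's 1-based index j corresponds to list position j - 1.\<close>

definition grain_pattern :: "nat \<Rightarrow> nat set \<Rightarrow> bool" where
  "grain_pattern n E \<longleftrightarrow> E \<subseteq> {2..n} \<and> (\<forall>j\<in>E. Suc j \<notin> E)"

definition phi :: "nat set \<Rightarrow> bool list \<Rightarrow> bool list" where
  "phi E x = map (\<lambda>j. if j \<in> E then x ! (j - 2) else x ! (j - 1)) [1..<Suc (length x)]"

definition Phi :: "nat \<Rightarrow> bool list \<Rightarrow> bool list set" where
  "Phi t x = {phi E x | E. grain_pattern (length x) E \<and> card E \<le> t}"

definition runs :: "bool list \<Rightarrow> (nat \<times> nat) set" where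
  "runs xs = {(i, j). i \<le> j \<and> j < length xs \<and> (\<forall>k\<in>{i..j}. xs ! k = xs ! i)
     \<and> (i = 0 \<or> xs ! (i - 1) \<noteq> xs ! i) \<and> (Suc j = length xs \<or> xs ! Suc j \<noteq> xs ! i)}"

definition num_runs :: "bool list \<Rightarrow> nat" where
  "num_runs xs = card (runs xs)"

definition one_runs :: "bool list \<Rightarrow> (nat \<times> nat) set" where
  "one_runs xs = {(i, j) \<in> runs xs. xs ! i}"

definition deriv_seq :: "bool list \<Rightarrow> bool list" where
  "deriv_seq x = map (\<lambda>(a, b). a \<noteq> b) (zip x (tl x))"

definition hamming_weight :: "bool list \<Rightarrow> nat" where
  "hamming_weight xs = length (filter id xs)"

end

theory Submission
  imports Defs
begin

text \<open>A grain pattern changes \<open>x\<close> exactly at those of its positions \<open>j\<close> with \<open>x\<^sub>j\<^sub>-\<^sub>1 \<noteq> x\<^sub>j\<close>,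
  i.e. at the support of \<open>x'\<close> shifted by two. Intersecting a pattern with this set of change
  positions does not change its image, and distinct subsets of it give distinct images, so
  \<open>|\<Phi>\<^sub>t(x)|\<close> counts the nonconsecutive subsets of size at most \<open>t\<close> of a set of size \<open>\<omega>\<close>.
  Inserting the largest element of the set one at a time shows that the numbers of such subsets
  of sizes 1, 2, 3 depend only on \<open>\<omega>\<close>, the number \<open>p\<close> of adjacent pairs and the number \<open>q\<close> of
  adjacent triples. Finally each 1-run of \<open>x'\<close> is identified by its first position, which
  gives \<open>m = \<omega> - p\<close> and \<open>m\<^sub>1 = \<omega> + q - 2p\<close>.\<close>

definition nonconsecutive :: "nat set \<Rightarrow> bool" where
  "nonconsecutive E \<longleftrightarrow> (\<forall>j\<in>E. Suc j \<notin> E)"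

definition nonconsecutive_subsets :: "nat \<Rightarrow> nat set \<Rightarrow> nat set set" where
  "nonconsecutive_subsets k A = {E. E \<subseteq> A \<and> nonconsecutive E \<and> card E = k}"

definition adjacent_pairs :: "nat set \<Rightarrow> nat set" where
  "adjacent_pairs A = {j \<in> A. Suc j \<in> A}"

definition adjacent_triples :: "nat set \<Rightarrow> nat set" where
  "adjacent_triples A = {j \<in> A. Suc j \<in> A \<and> Suc (Suc j) \<in> A}"

lemma finite_nonconsecutive_subsets: "finite A \<Longrightarrow> finite (nonconsecutive_subsets k A)"
  unfolding nonconsecutive_subsets_def by (rule finite_subset[of _ "Pow A"]) auto

lemma nonconsecutive_insert:
  "nonconsecutive (insert n F) \<longleftrightarrow> nonconsecutive F \<and> Suc n \<notin> F \<and> (\<forall>j\<in>F. Suc j \<noteq> n)"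
  by (auto simp: nonconsecutive_def)

lemma nonconsecutive_subsets_0: "finite A \<Longrightarrow> nonconsecutive_subsets 0 A = {{}}"
  by (auto simp: nonconsecutive_subsets_def nonconsecutive_def dest: finite_subset)

lemma nonconsecutive_subsets_Suc_empty: "nonconsecutive_subsets (Suc k) {} = {}"
  by (simp add: nonconsecutive_subsets_def)

lemma card_nonconsecutive_subsets_1: "finite A \<Longrightarrow> card (nonconsecutive_subsets 1 A) = card A"
proof -
  assume "finite A"
  have "nonconsecutive_subsets 1 A = {E. E \<subseteq> A \<and> card E = 1}"
    by (auto simp: nonconsecutive_subsets_def nonconsecutive_def card_Suc_eq)
  then show ?thesis
    using n_subsets[OF \<open>finite A\<close>, of 1] by simp
qed

lemma card_nonconsecutive_subsets_insert_max:
  assumes "finite B" and "\<forall>b\<in>B. b < N"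
  shows "card (nonconsecutive_subsets (Suc k) (insert N B))
       = card (nonconsecutive_subsets (Suc k) B) + card (nonconsecutive_subsets k (B - {N - 1}))"
proof -
  let ?old = "nonconsecutive_subsets (Suc k) B"
  let ?new = "insert N ` nonconsecutive_subsets k (B - {N - 1})"
  have "N \<notin> B"
    using assms(2) by blast
  have "nonconsecutive_subsets (Suc k) (insert N B) = ?old \<union> ?new"
  proof (intro equalityI subsetI)
    fix E assume E: "E \<in> nonconsecutive_subsets (Suc k) (insert N B)"
    show "E \<in> ?old \<union> ?new"
    proof (cases "N \<in> E")
      case True
      then have "E = insert N (E - {N})" by blast
      moreover have "E - {N} \<in> nonconsecutive_subsets k (B - {N - 1})"
        using E True assms \<open>N \<notin> B\<close> finite_subset[of E "insert N B"]
        by (auto simp: nonconsecutive_subsets_def nonconsecutive_def)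
      ultimately show ?thesis by blast
    qed (use E in \<open>auto simp: nonconsecutive_subsets_def\<close>)
  next
    fix E assume "E \<in> ?old \<union> ?new"
    then show "E \<in> nonconsecutive_subsets (Suc k) (insert N B)"
      using assms \<open>N \<notin> B\<close>
      by (auto simp: nonconsecutive_subsets_def nonconsecutive_insert finite_subset card_insert_if)
        (fastforce, blast)
  qed
  moreover have "?old \<inter> ?new = {}"
    using \<open>N \<notin> B\<close> by (auto simp: nonconsecutive_subsets_def)
  moreover have "inj_on (insert N) (nonconsecutive_subsets k (B - {N - 1}))"
    using \<open>N \<notin> B\<close> by (auto simp: inj_on_def nonconsecutive_subsets_def)
  ultimately show ?thesis
    using assms(1) by (simp add: card_Un_disjoint finite_nonconsecutive_subsets card_image)
qed

lemma card_adjacent_pairs_insert_max: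
  assumes "finite B" and "\<forall>b\<in>B. b < N"
  shows "card (adjacent_pairs (insert N B)) = card (adjacent_pairs B) + card (B \<inter> {N - 1})"
proof -
  have "adjacent_pairs (insert N B) = adjacent_pairs B \<union> B \<inter> {N - 1}"
    using assms(2) by (auto simp: adjacent_pairs_def)
  moreover have "adjacent_pairs B \<inter> (B \<inter> {N - 1}) = {}"
    using assms(2) by (auto simp: adjacent_pairs_def)
  ultimately show ?thesis
    using assms(1) by (simp add: card_Un_disjoint adjacent_pairs_def)
qed

lemma card_adjacent_triples_insert_max:
  assumes "finite B" and "\<forall>b\<in>B. b < N"
  shows "card (adjacent_triples (insert N B))
       = card (adjacent_triples B) + card (adjacent_pairs B \<inter> {N - 2})"
proof -
  have "adjacent_triples (insert N B) = adjacent_triples B \<union> adjacent_pairs B \<inter> {N - 2}"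
    using assms(2) by (auto simp: adjacent_triples_def adjacent_pairs_def)
  moreover have "adjacent_triples B \<inter> (adjacent_pairs B \<inter> {N - 2}) = {}"
    using assms(2) by (auto simp: adjacent_triples_def)
  ultimately show ?thesis
    using assms(1) by (simp add: card_Un_disjoint adjacent_triples_def adjacent_pairs_def)
qed

lemma adjacent_pairs_remove_max_pred:
  "\<forall>b\<in>B. b < N \<Longrightarrow> adjacent_pairs (B - {N - 1}) = adjacent_pairs B - {N - 2}"
  by (auto simp: adjacent_pairs_def)

lemma card_nonconsecutive_subsets_2:
  assumes "finite A"
  shows "card (nonconsecutive_subsets 2 A) + card (adjacent_pairs A) = card A choose 2"
  using assms
proof (induction A rule: finite_linorder_max_induct)
  case empty
  show ?case
    using nonconsecutive_subsets_Suc_empty[of 1] by (simp add: numeral_2_eq_2 adjacent_pairs_def)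
next
  case (insert N B)
  let ?B' = "B - {N - 1}"
  have "N \<notin> B"
    using insert.hyps(2) by blast
  have "card (nonconsecutive_subsets 2 (insert N B))
      = card (nonconsecutive_subsets 2 B) + card (B - {N - 1})"
    using card_nonconsecutive_subsets_insert_max[OF insert.hyps(1,2), of 1]
      card_nonconsecutive_subsets_1[of ?B'] insert.hyps(1)
    by (simp add: numeral_2_eq_2)
  moreover note card_adjacent_pairs_insert_max[OF insert.hyps(1,2)]
  moreover have "card B = card (B \<inter> {N - 1}) + card (B - {N - 1})"
    using insert.hyps(1) by (rule card_Int_Diff)
  ultimately show ?case
    using insert.IH insert.hyps(1) \<open>N \<notin> B\<close> by (simp add: numeral_2_eq_2)
qed

lemma card_nonconsecutive_subsets_3:
  assumes "finite A"
  shows "int (card (nonconsecutive_subsets 3 A)) + (int (card A) - 2) * int (card (adjacent_pairs A))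
       = int (card A choose 3) + int (card (adjacent_triples A))"
  using assms
proof (induction A rule: finite_linorder_max_induct)
  case empty
  show ?case
    using nonconsecutive_subsets_Suc_empty[of 2]
    by (simp add: numeral_3_eq_3 adjacent_pairs_def adjacent_triples_def)
next
  case (insert N B)
  let ?B' = "B - {N - 1}"
  let ?d1 = "card (B \<inter> {N - 1})" and ?d2 = "card (adjacent_pairs B \<inter> {N - 2})"
  have "N \<notin> B"
    using insert.hyps(2) by blast
  have ns3: "card (nonconsecutive_subsets 3 (insert N B))
      = card (nonconsecutive_subsets 3 B) + card (nonconsecutive_subsets 2 ?B')"
    using card_nonconsecutive_subsets_insert_max[OF insert.hyps(1,2), of 2]
    by (simp add: numeral_3_eq_3 numeral_2_eq_2)
  have ns2: "card (nonconsecutive_subsets 2 ?B') + card (adjacent_pairs B - {N - 2}) = card ?B' choose 2"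
    using card_nonconsecutive_subsets_2[of ?B'] adjacent_pairs_remove_max_pred[OF insert.hyps(2)]
      insert.hyps(1) by simp
  have pairs_B': "card (adjacent_pairs B) = ?d2 + card (adjacent_pairs B - {N - 2})"
    using insert.hyps(1) by (simp add: card_Int_Diff adjacent_pairs_def)
  have card_A: "card (insert N B) = Suc (card B)"
    using insert.hyps(1) \<open>N \<notin> B\<close> by simp
  have choose3: "card (insert N B) choose 3 = (card B choose 3) + (card B choose 2)"
    using card_A by (simp add: numeral_3_eq_3 numeral_2_eq_2)
  have choose2: "int (card B choose 2) = int (card ?B' choose 2) + (int (card B) - 1) * int ?d1"
  proof (cases "N - 1 \<in> B")
    case True
    then obtain b where "card B = Suc b" and "card ?B' = b"
      using insert.hyps(1) by (metis card_Suc_Diff1)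
    then show ?thesis
      using True by (simp add: numeral_2_eq_2)
  qed simp
  show ?case
    using insert.IH ns3 ns2 pairs_B' choose3 choose2 card_A
      card_adjacent_pairs_insert_max[OF insert.hyps(1,2)]
      card_adjacent_triples_insert_max[OF insert.hyps(1,2)]
    by (simp add: algebra_simps)
qed

lemma card_nonconsecutive_subsets_atMost:
  assumes "finite A"
  shows "card {E. E \<subseteq> A \<and> nonconsecutive E \<and> card E \<le> t} = (\<Sum>k\<le>t. card (nonconsecutive_subsets k A))"
proof -
  have "{E. E \<subseteq> A \<and> nonconsecutive E \<and> card E \<le> t} = (\<Union>k\<le>t. nonconsecutive_subsets k A)"
    by (auto simp: nonconsecutive_subsets_def)
  also have "card \<dots> = (\<Sum>k\<le>t. card (nonconsecutive_subsets k A))"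
    by (rule card_UN_disjoint) (auto simp: assms finite_nonconsecutive_subsets nonconsecutive_subsets_def)
  finally show ?thesis .
qed

definition block_starts :: "nat set \<Rightarrow> nat set" where
  "block_starts A = {j \<in> A. j = 0 \<or> j - 1 \<notin> A}"

definition isolated_points :: "nat set \<Rightarrow> nat set" where
  "isolated_points A = {j \<in> block_starts A. Suc j \<notin> A}"

lemma card_block_starts:
  assumes "finite A"
  shows "card (block_starts A) + card (adjacent_pairs A) = card A"
proof -
  have "A = block_starts A \<union> Suc ` adjacent_pairs A"
  proof (intro equalityI subsetI)
    fix j assume "j \<in> A"
    then show "j \<in> block_starts A \<union> Suc ` adjacent_pairs A"
      by (cases j) (auto simp: block_starts_def adjacent_pairs_def)
  qed (auto simp: block_starts_def adjacent_pairs_def)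
  moreover have "block_starts A \<inter> Suc ` adjacent_pairs A = {}"
    by (auto simp: block_starts_def adjacent_pairs_def)
  ultimately show ?thesis
    using assms card_Un_disjoint[of "block_starts A" "Suc ` adjacent_pairs A"]
    by (simp add: block_starts_def adjacent_pairs_def card_image)
qed

lemma card_isolated_points:
  assumes "finite A"
  shows "card (isolated_points A) + 2 * card (adjacent_pairs A) = card A + card (adjacent_triples A)"
proof -
  let ?S = "block_starts A \<inter> adjacent_pairs A"
  have fin: "finite (block_starts A)" "finite (adjacent_pairs A)" "finite (adjacent_triples A)"
    using assms by (simp_all add: block_starts_def adjacent_pairs_def adjacent_triples_def)
  have "block_starts A = isolated_points A \<union> ?S"
    by (auto simp: isolated_points_def block_starts_def adjacent_pairs_def)
  then have starts: "card (block_starts A) = card (isolated_points A) + card ?S"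
    using fin by (subst card_Un_disjoint[symmetric]) (auto simp: isolated_points_def adjacent_pairs_def)
  have "adjacent_pairs A = ?S \<union> Suc ` adjacent_triples A"
  proof (intro equalityI subsetI)
    fix j assume "j \<in> adjacent_pairs A"
    then show "j \<in> ?S \<union> Suc ` adjacent_triples A"
      by (cases j) (auto simp: block_starts_def adjacent_pairs_def adjacent_triples_def)
  qed (auto simp: block_starts_def adjacent_pairs_def adjacent_triples_def)
  moreover have "?S \<inter> Suc ` adjacent_triples A = {}"
    by (auto simp: block_starts_def adjacent_triples_def)
  ultimately have "card (adjacent_pairs A) = card ?S + card (adjacent_triples A)"
    using fin by (metis card_Un_disjoint card_image finite_Int finite_imageI inj_Suc)
  then show ?thesis
    using starts card_block_starts[OF assms] by simp
qed

lemma adjacent_pairs_shift: "adjacent_pairs ((\<lambda>i. i + c) ` A) = (\<lambda>i. i + c) ` adjacent_pairs A"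
  by (auto simp: adjacent_pairs_def image_iff)

lemma adjacent_triples_shift: "adjacent_triples ((\<lambda>i. i + c) ` A) = (\<lambda>i. i + c) ` adjacent_triples A"
  by (auto simp: adjacent_triples_def image_iff)

definition ones :: "bool list \<Rightarrow> nat set" where
  "ones xs = {i. i < length xs \<and> xs ! i}"

definition run_starts :: "bool list \<Rightarrow> nat set" where
  "run_starts xs = {i. i < length xs \<and> (i = 0 \<or> xs ! (i - 1) \<noteq> xs ! i)}"

lemma finite_ones: "finite (ones xs)"
  by (simp add: ones_def)

lemma hamming_weight_eq_card_ones: "hamming_weight xs = card (ones xs)"
  by (simp add: hamming_weight_def ones_def length_filter_conv_card)

text \<open>The constancy clause below must not be given to the simplifier: as the conditional rule
  \<open>xs ! k = xs ! i\<close> it loops by instantiating \<open>k := i\<close>.\<close>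

lemma mem_runs_iff:
  "(i, j) \<in> runs xs \<longleftrightarrow> i \<le> j \<and> j < length xs \<and> (\<forall>k. i \<le> k \<and> k \<le> j \<longrightarrow> xs ! k = xs ! i)
     \<and> (i = 0 \<or> xs ! (i - 1) \<noteq> xs ! i) \<and> (Suc j = length xs \<or> xs ! Suc j \<noteq> xs ! i)"
  by (simp add: runs_def Ball_def)

lemma inj_on_fst_runs: "inj_on fst (runs xs)"
proof -
  have "j \<le> j'" if "(i, j) \<in> runs xs" and "(i, j') \<in> runs xs" for i j j'
  proof (rule ccontr)
    assume "\<not> j \<le> j'"
    moreover have "i \<le> j'" and "Suc j' = length xs \<or> xs ! Suc j' \<noteq> xs ! i"
      using that(2) unfolding mem_runs_iff by blast+
    moreover have "j < length xs" and "\<forall>k. i \<le> k \<and> k \<le> j \<longrightarrow> xs ! k = xs ! i"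
      using that(1) unfolding mem_runs_iff by blast+
    ultimately show False
      by (metis Suc_leI le_SucI not_le)
  qed
  then show ?thesis
    by (intro inj_onI) (metis antisym prod.collapse)
qed

lemma fst_runs: "fst ` runs xs = run_starts xs"
proof (intro equalityI subsetI)
  fix i assume "i \<in> fst ` runs xs"
  then obtain j where "(i, j) \<in> runs xs"
    by force
  then have "i \<le> j" and "j < length xs" and "i = 0 \<or> xs ! (i - 1) \<noteq> xs ! i"
    unfolding mem_runs_iff by blast+
  then show "i \<in> run_starts xs"
    by (simp add: run_starts_def)
next
  fix i assume i: "i \<in> run_starts xs"
  let ?is_end = "\<lambda>k. i \<le> k \<and> (Suc k = length xs \<or> xs ! Suc k \<noteq> xs ! i)"
  define j where "j = (LEAST k. ?is_end k)"
  have last_is_end: "?is_end (length xs - 1)"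
    using i by (auto simp: run_starts_def)
  have end_j: "?is_end j"
    unfolding j_def using last_is_end by (rule LeastI)
  have "j \<le> length xs - 1"
    unfolding j_def using last_is_end by (rule Least_le)
  moreover have "i < length xs"
    using i by (simp add: run_starts_def)
  ultimately have "j < length xs"
    by linarith
  have "(i, j) \<in> runs xs"
    unfolding mem_runs_iff
  proof (intro conjI)
    show "\<forall>k. i \<le> k \<and> k \<le> j \<longrightarrow> xs ! k = xs ! i"
    proof (intro allI impI)
      fix k assume k: "i \<le> k \<and> k \<le> j"
      show "xs ! k = xs ! i"
      proof (cases "k = i")
        case False
        then obtain l where "k = Suc l" and "i \<le> l" and "l < j"
          using k False by (cases k) auto
        moreover have "\<not> ?is_end l"
          using \<open>l < j\<close> unfolding j_def by (rule not_less_Least)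
        ultimately show ?thesis
          by simp
      qed simp
    qed
  qed (use i end_j \<open>j < length xs\<close> in \<open>simp_all add: run_starts_def\<close>)
  then show "i \<in> fst ` runs xs"
    by force
qed

lemma card_runs: "card (runs xs) = card (run_starts xs)"
  using inj_on_fst_runs fst_runs by (metis card_image)

lemma fst_one_runs: "fst ` one_runs xs = block_starts (ones xs)"
proof -
  have "fst ` one_runs xs = {i \<in> fst ` runs xs. xs ! i}"
    by (force simp: one_runs_def)
  also have "\<dots> = block_starts (ones xs)"
    by (auto simp: fst_runs run_starts_def block_starts_def ones_def)
  finally show ?thesis .
qed

lemma card_one_runs: "card (one_runs xs) = card (block_starts (ones xs))"
proof -
  have "inj_on fst (one_runs xs)"
    by (rule inj_on_subset[OF inj_on_fst_runs]) (auto simp: one_runs_def)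
  then show ?thesis
    using card_image fst_one_runs by metis
qed

lemma singleton_mem_runs_iff:
  "(i, i) \<in> runs xs \<longleftrightarrow> i < length xs \<and> (i = 0 \<or> xs ! (i - 1) \<noteq> xs ! i)
     \<and> (Suc i = length xs \<or> xs ! Suc i \<noteq> xs ! i)"
  by (simp add: runs_def)

lemma card_singleton_one_runs:
  "card {(i, j) \<in> one_runs xs. j = i} = card (isolated_points (ones xs))"
proof -
  have "{(i, j) \<in> one_runs xs. j = i} = (\<lambda>i. (i, i)) ` isolated_points (ones xs)"
    by (auto simp: one_runs_def singleton_mem_runs_iff isolated_points_def block_starts_def ones_def)
      (metis Suc_lessI length_greater_0_conv)
  moreover have "inj (\<lambda>i::nat. (i, i))"
    by (simp add: inj_on_def)
  ultimately show ?thesis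
    by (simp add: card_image inj_on_subset)
qed

lemma card_one_runs_add_adjacent_pairs:
  "card (one_runs xs) + card (adjacent_pairs (ones xs)) = hamming_weight xs"
  using card_block_starts[OF finite_ones] by (simp add: card_one_runs hamming_weight_eq_card_ones)

lemma card_singleton_one_runs_add_adjacent_pairs:
  "card {(i, j) \<in> one_runs xs. j = i} + 2 * card (adjacent_pairs (ones xs))
     = hamming_weight xs + card (adjacent_triples (ones xs))"
  using card_isolated_points[OF finite_ones]
  by (simp add: card_singleton_one_runs hamming_weight_eq_card_ones)

lemma length_deriv_seq: "length (deriv_seq x) = length x - 1"
  by (simp add: deriv_seq_def)

lemma nth_deriv_seq: "i < length x - 1 \<Longrightarrow> deriv_seq x ! i = (x ! i \<noteq> x ! Suc i)"
  by (simp add: deriv_seq_def nth_tl)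

lemma run_starts_eq_insert_0:
  assumes "x \<noteq> []"
  shows "run_starts x = insert 0 (Suc ` ones (deriv_seq x))"
proof (intro equalityI subsetI)
  fix i assume "i \<in> run_starts x"
  then show "i \<in> insert 0 (Suc ` ones (deriv_seq x))"
    by (cases i) (auto simp: run_starts_def ones_def length_deriv_seq nth_deriv_seq)
next
  fix i assume "i \<in> insert 0 (Suc ` ones (deriv_seq x))"
  then show "i \<in> run_starts x"
    using assms by (auto simp: run_starts_def ones_def length_deriv_seq nth_deriv_seq)
qed

lemma num_runs_eq_Suc_card_ones:
  "x \<noteq> [] \<Longrightarrow> num_runs x = Suc (card (ones (deriv_seq x)))"
  by (simp add: num_runs_def card_runs run_starts_eq_insert_0 finite_ones card_image)

definition change_positions :: "bool list \<Rightarrow> nat set" where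
  "change_positions x = {j. 2 \<le> j \<and> j \<le> length x \<and> x ! (j - 2) \<noteq> x ! (j - 1)}"

lemma change_positions_eq_shift: "change_positions x = (\<lambda>i. i + 2) ` ones (deriv_seq x)"
proof (intro equalityI subsetI)
  fix j assume "j \<in> change_positions x"
  then have "j - 2 \<in> ones (deriv_seq x)" and "j = j - 2 + 2"
    by (auto simp: change_positions_def ones_def length_deriv_seq nth_deriv_seq Suc_diff_Suc numeral_2_eq_2)
  then show "j \<in> (\<lambda>i. i + 2) ` ones (deriv_seq x)"
    by blast
qed (auto simp: change_positions_def ones_def length_deriv_seq nth_deriv_seq)

lemma finite_change_positions: "finite (change_positions x)"
  by (simp add: change_positions_eq_shift finite_ones)

lemma grain_pattern_iff: "grain_pattern n E \<longleftrightarrow> E \<subseteq> {2..n} \<and> nonconsecutive E"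
  by (simp add: grain_pattern_def nonconsecutive_def)

lemma length_phi: "length (phi E x) = length x"
  by (simp add: phi_def del: upt_Suc)

lemma nth_phi: "i < length x \<Longrightarrow> phi E x ! i = (if Suc i \<in> E then x ! (i - 1) else x ! i)"
  by (simp add: phi_def del: upt_Suc)

lemma phi_restrict_change_positions:
  assumes "E \<subseteq> {2..length x}"
  shows "phi E x = phi (E \<inter> change_positions x) x"
proof (rule nth_equalityI)
  fix i assume "i < length (phi E x)"
  then show "phi E x ! i = phi (E \<inter> change_positions x) x ! i"
    using assms by (auto simp: length_phi nth_phi change_positions_def)
qed (simp add: length_phi)

lemma inj_on_phi: "inj_on (\<lambda>E. phi E x) (Pow (change_positions x))"
proof -
  have differ: "phi E x \<noteq> phi F x" if "E \<subseteq> change_positions x" "j \<in> E" "j \<notin> F" for E F j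
  proof -
    have j: "2 \<le> j" "j \<le> length x" "x ! (j - 2) \<noteq> x ! (j - 1)"
      using that(1,2) by (auto simp: change_positions_def)
    then have "Suc (j - 1) = j" and "j - 1 - 1 = j - 2" and "j - 1 < length x"
      by arith+
    then have "phi E x ! (j - 1) = x ! (j - 2)" and "phi F x ! (j - 1) = x ! (j - 1)"
      using that(2,3) by (simp_all add: nth_phi)
    then show ?thesis
      using j(3) by auto
  qed
  show ?thesis
  proof (rule inj_onI, rule ccontr)
    fix E F assume EF: "E \<in> Pow (change_positions x)" "F \<in> Pow (change_positions x)"
      and "phi E x = phi F x" and "E \<noteq> F"
    then obtain j where "j \<in> E \<and> j \<notin> F \<or> j \<in> F \<and> j \<notin> E"
      by blast
    then show False
      using differ[of E j F] differ[of F j E] EF \<open>phi E x = phi F x\<close> by auto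
  qed
qed

lemma Phi_eq_image:
  "Phi t x = (\<lambda>E. phi E x) ` {E. E \<subseteq> change_positions x \<and> nonconsecutive E \<and> card E \<le> t}"
proof (intro equalityI subsetI)
  fix y assume "y \<in> Phi t x"
  then obtain E where E: "E \<subseteq> {2..length x}" "nonconsecutive E" "card E \<le> t" and y: "y = phi E x"
    by (auto simp: Phi_def grain_pattern_iff)
  let ?E' = "E \<inter> change_positions x"
  have "finite E"
    using E(1) by (rule finite_subset) simp
  then have "card ?E' \<le> t"
    using E(3) by (meson card_mono inf_le1 le_trans)
  moreover have "nonconsecutive ?E'"
    using E(2) by (simp add: nonconsecutive_def)
  moreover have "y = phi ?E' x"
    using E(1) y by (simp add: phi_restrict_change_positions)
  ultimately show "y \<in> (\<lambda>E. phi E x) ` {E. E \<subseteq> change_positions x \<and> nonconsecutive E \<and> card E \<le> t}"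
    by blast
next
  fix y assume "y \<in> (\<lambda>E. phi E x) ` {E. E \<subseteq> change_positions x \<and> nonconsecutive E \<and> card E \<le> t}"
  moreover have "change_positions x \<subseteq> {2..length x}"
    by (auto simp: change_positions_def)
  ultimately show "y \<in> Phi t x"
    by (auto simp: Phi_def grain_pattern_iff)
qed

lemma card_Phi: "card (Phi t x) = (\<Sum>k\<le>t. card (nonconsecutive_subsets k (change_positions x)))"
proof -
  have "inj_on (\<lambda>E. phi E x) {E. E \<subseteq> change_positions x \<and> nonconsecutive E \<and> card E \<le> t}"
    by (rule inj_on_subset[OF inj_on_phi]) blast
  then show ?thesis
    by (simp add: Phi_eq_image card_image card_nonconsecutive_subsets_atMost finite_change_positions)
qed

lemma card_change_positions:
  "card (change_positions x) = hamming_weight (deriv_seq x)"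
  "card (adjacent_pairs (change_positions x)) = card (adjacent_pairs (ones (deriv_seq x)))"
  "card (adjacent_triples (change_positions x)) = card (adjacent_triples (ones (deriv_seq x)))"
  unfolding change_positions_eq_shift adjacent_pairs_shift adjacent_triples_shift
    hamming_weight_eq_card_ones
  by (simp_all add: card_image inj_on_def)

lemma card_Phi_1: "card (Phi 1 x) = 1 + hamming_weight (deriv_seq x)"
  using card_nonconsecutive_subsets_1[OF finite_change_positions]
    nonconsecutive_subsets_0[OF finite_change_positions]
  by (simp add: card_Phi card_change_positions)

lemma card_Phi_2:
  "card (Phi 2 x) + card (adjacent_pairs (ones (deriv_seq x)))
     = 1 + hamming_weight (deriv_seq x) + (hamming_weight (deriv_seq x) choose 2)"
  using card_Phi_1[of x] card_nonconsecutive_subsets_2[OF finite_change_positions, of x]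
  by (simp add: card_Phi numeral_2_eq_2 card_change_positions)

lemma card_Phi_3:
  "int (card (Phi 3 x)) + (int (hamming_weight (deriv_seq x)) - 1) * int (card (adjacent_pairs (ones (deriv_seq x))))
     = 1 + int (hamming_weight (deriv_seq x)) + int (hamming_weight (deriv_seq x) choose 2)
       + int (hamming_weight (deriv_seq x) choose 3) + int (card (adjacent_triples (ones (deriv_seq x))))"
proof -
  have "card (Phi 3 x) = card (Phi 2 x) + card (nonconsecutive_subsets 3 (change_positions x))"
    by (simp add: card_Phi numeral_3_eq_3 numeral_2_eq_2)
  then show ?thesis
    using card_Phi_2[of x] card_nonconsecutive_subsets_3[OF finite_change_positions, of x]
    by (simp add: card_change_positions algebra_simps flip: of_nat_add)
qed

theorem proposition2p1:
  fixes n :: nat and x :: "bool list"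
  assumes "n \<ge> 1" and "length x = n"
  defines "\<omega> \<equiv> hamming_weight (deriv_seq x)"
      and "m \<equiv> card (one_runs (deriv_seq x))"
      and "m1 \<equiv> card {(i, j) \<in> one_runs (deriv_seq x). j = i}"
  shows "(card (Phi 1 x) = 1 + \<omega> \<and> 1 + \<omega> = num_runs x)
       \<and> card (Phi 2 x) = 1 + m + (\<omega> choose 2)
       \<and> int (card (Phi 3 x)) = 1 + int m1 + int m * (int \<omega> - 3) + int (\<omega> choose 3)
           - int (\<omega> choose 2) + 2 * int \<omega>"
proof -
  let ?p = "card (adjacent_pairs (ones (deriv_seq x)))"
  have "x \<noteq> []"
    using assms(1,2) by auto
  then have "num_runs x = 1 + \<omega>"
    by (simp add: num_runs_eq_Suc_card_ones \<omega>_def hamming_weight_eq_card_ones)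
  moreover have "card (Phi 2 x) = 1 + m + (\<omega> choose 2)"
    using card_Phi_2[of x] card_one_runs_add_adjacent_pairs[of "deriv_seq x"]
    by (simp add: \<omega>_def m_def)
  moreover have "int (card (Phi 3 x)) = 1 + int m1 + int m * (int \<omega> - 3) + int (\<omega> choose 3)
           - int (\<omega> choose 2) + 2 * int \<omega>"
  proof -
    have "int (2 * (\<omega> choose 2)) = int (\<omega> * (\<omega> - 1))"
      using times_binomial_minus1_eq[of 2 \<omega>] by simp
    then have "2 * int (\<omega> choose 2) = int \<omega> * (int \<omega> - 1)"
      by (cases \<omega>) (simp_all add: algebra_simps)
    moreover have "int m + int ?p = int \<omega>"
      using card_one_runs_add_adjacent_pairs[of "deriv_seq x"] unfolding \<omega>_def m_def by linarith
    moreover have "int m1 + 2 * int ?p = int \<omega> + int (card (adjacent_triples (ones (deriv_seq x))))"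
      using card_singleton_one_runs_add_adjacent_pairs[of "deriv_seq x"] unfolding \<omega>_def m1_def by linarith
    ultimately show ?thesis
      using card_Phi_3[of x] unfolding \<omega>_def[symmetric] by algebra
  qed
  ultimately show ?thesis
    using card_Phi_1[of x] by (simp add: \<omega>_def)
qed

end
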